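(* Let $A_1,\dots,A_n$ be games with a common probability measure $dF$, and let $Q$, $S$, $L$ and $T$ be as defined in the context. Then $T$ is closed.
   Context: A game is a pair $A=(a(x),dF(x))$ where $dF$ is a probability measure on $\mathbb{R}$ and $a\ge 0$ is measurable with $0<E^A:=\int a\,dF<\infty$. A real number $r$ is fixed; conventions $\exp(-\infty)=0$, $1/(+\infty)=0$. The price $u_r^A$: put $G^A:=\exp(\int\log a\,dF)/e^r$, $H^A:=1/\int (1/a)\,dF$; if $G^A\le H^A$ then $u_r^A:=G^A$, otherwise $u_r^A:=u$ where $(u,t_u)$, $u>0$, $0<t_u\le1$, is the unique solution of $\exp(\int\log(\frac{a(x)}{u}t_u-t_u+1)dF(x))=e^r$, $\int\frac{a(x)-u}{a(x)t_u-ut_u+u}dF(x)=0$. In particular $u_r^A>0$ for the games considered. For games $A_i=(a_i(x),dF(x))$, $i=1,\dots,n$, write $\sum p_iA_i$ for the game $(\sum p_ia_i(x),dF(x))$. Let $Q=\{(p_i)\in\mathbb{R}^n:p_i\ge0,\sum p_i=1\}$, $S=[0,1]^n$, and for $(t_i)\in S$ let $L((t_i)):=\sup_{(p_i)\in Q}\dfrac{u_r^{\sum_{i=1}^n p_iA_i}}{\sum_{i=1}^n p_i\big(u_r^{A_i}+t_i(E^{A_i}/e^r-u_r^{A_i})\big)}$. Let $T:=\{(t_i)\in S: L((t_i))\le 1\}$. *)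

theory Defs
  imports "HOL-Probability.Probability"
begin

text \<open>Extended-real integral of log g (log of values \<le> 0 is taken as -\<infinity>).
  Positive and negative parts are integrated separately.\<close>
definition elogint :: "real measure \<Rightarrow> (real \<Rightarrow> real) \<Rightarrow> ereal" where
  "elogint F g =
     enn2ereal (\<integral>\<^sup>+ x. ennreal (if g x > 0 then max 0 (ln (g x)) else 0) \<partial>F)
   - enn2ereal (\<integral>\<^sup>+ x. (if g x \<le> 0 then \<infinity> else ennreal (max 0 (- ln (g x)))) \<partial>F)"

definition game :: "real measure \<Rightarrow> (real \<Rightarrow> real) \<Rightarrow> bool" where
  "game F a \<longleftrightarrow> a \<in> borel_measurable F \<and> (\<forall>x. a x \<ge> 0) \<and> integrable F a
      \<and> 0 < integral\<^sup>L F a"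

definition expect :: "real measure \<Rightarrow> (real \<Rightarrow> real) \<Rightarrow> real" where
  "expect F a = integral\<^sup>L F a"

text \<open>G = exp(\<integral> log a dF) / e^r, with exp(-\<infinity>) = 0.\<close>
definition Gval :: "real measure \<Rightarrow> real \<Rightarrow> (real \<Rightarrow> real) \<Rightarrow> real" where
  "Gval F r a = (case elogint F a of ereal y \<Rightarrow> exp y / exp r | _ \<Rightarrow> 0)"

text \<open>H = 1 / \<integral> (1/a) dF, with 1/0 = \<infinity> and 1/\<infinity> = 0.\<close>
definition Hval :: "real measure \<Rightarrow> (real \<Rightarrow> real) \<Rightarrow> real" where
  "Hval F a = (let I = (\<integral>\<^sup>+ x. (if a x = 0 then \<infinity> else ennreal (1 / a x)) \<partial>F)
               in if I = \<infinity> then 0 else 1 / enn2real I)"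

definition price_system :: "real measure \<Rightarrow> real \<Rightarrow> (real \<Rightarrow> real) \<Rightarrow> real \<Rightarrow> real \<Rightarrow> bool" where
  "price_system F r a u t \<longleftrightarrow> u > 0 \<and> 0 < t \<and> t \<le> 1
     \<and> elogint F (\<lambda>x. a x / u * t - t + 1) = ereal r
     \<and> integrable F (\<lambda>x. (a x - u) / (a x * t - u * t + u))
     \<and> integral\<^sup>L F (\<lambda>x. (a x - u) / (a x * t - u * t + u)) = 0"

definition price :: "real measure \<Rightarrow> real \<Rightarrow> (real \<Rightarrow> real) \<Rightarrow> real" where
  "price F r a = (if Gval F r a \<le> Hval F a then Gval F r a
                  else (THE u. \<exists>t. price_system F r a u t))"

definition simplexQ :: "(real ^ 'n::finite) set" where
  "simplexQ = {p. (\<forall>i. p $ i \<ge> 0) \<and> (\<Sum>i\<in>UNIV. p $ i) = 1}"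

definition cubeS :: "(real ^ 'n::finite) set" where
  "cubeS = {t. \<forall>i. 0 \<le> t $ i \<and> t $ i \<le> 1}"

definition Lfun :: "real measure \<Rightarrow> real \<Rightarrow> ('n::finite \<Rightarrow> real \<Rightarrow> real) \<Rightarrow> real ^ 'n \<Rightarrow> ereal" where
  "Lfun F r A t = (SUP p\<in>simplexQ.
      ereal (price F r (\<lambda>x. \<Sum>i\<in>UNIV. p $ i * A i x)
        / (\<Sum>i\<in>UNIV. p $ i * (price F r (A i)
               + t $ i * (expect F (A i) / exp r - price F r (A i))))))"

definition Tset :: "real measure \<Rightarrow> real \<Rightarrow> ('n::finite \<Rightarrow> real \<Rightarrow> real) \<Rightarrow> (real ^ 'n) set" where
  "Tset F r A = {t \<in> cubeS. Lfun F r A t \<le> 1}"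

end

theory Submission
  imports Defs
begin

text \<open>For each weight vector p the ratio in the definition of L has a numerator independent
  of t and a denominator affine in t, so the sublevel set of the ratio at level 1 is closed.
  T is the intersection of the closed cube S with all these sets, since a supremum is at
  most 1 exactly when every term is. No property of the games is needed.\<close>

lemma cubeS_eq_cbox: "cubeS = cbox (0 :: real ^ 'n::finite) 1"
  unfolding cubeS_def by (auto simp: mem_box_cart)

lemma closed_cubeS: "closed (cubeS :: (real ^ 'n::finite) set)"
  by (simp add: cubeS_eq_cbox closed_cbox)

text \<open>With the convention c / 0 = 0 the set is not {t. c \<le> D t}, but this union of two
  closed sets, which also covers the points where D vanishes.\<close>
lemma closed_Collect_divide_le_one:
  fixes c :: real and D :: "'a::topological_space \<Rightarrow> real"
  assumes "continuous_on UNIV D"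
  shows "closed {t. c / D t \<le> 1}"
proof (cases "c > 0")
  case True
  then have "{t. c / D t \<le> 1} = {t. c \<le> D t} \<union> {t. D t \<le> 0}"
    by (auto simp: divide_le_eq_1 not_le)
  then show ?thesis
    by (simp add: closed_Un closed_Collect_le assms continuous_on_const)
next
  case False
  then have "{t. c / D t \<le> 1} = {t. 0 \<le> D t} \<union> {t. D t \<le> c}"
    by (auto simp: divide_le_eq_1 not_le)
  then show ?thesis
    by (simp add: closed_Un closed_Collect_le assms continuous_on_const)
qed

definition Lratio :: "real measure \<Rightarrow> real \<Rightarrow> ('n::finite \<Rightarrow> real \<Rightarrow> real) \<Rightarrow> real ^ 'n
    \<Rightarrow> real ^ 'n \<Rightarrow> real" where
  "Lratio F r A p t = price F r (\<lambda>x. \<Sum>i\<in>UNIV. p $ i * A i x)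
     / (\<Sum>i\<in>UNIV. p $ i * (price F r (A i)
          + t $ i * (expect F (A i) / exp r - price F r (A i))))"

lemma Tset_eq_Inter_Lratio_le_one:
  "Tset F r A = cubeS \<inter> (\<Inter>p\<in>simplexQ. {t. Lratio F r A p t \<le> 1})"
  unfolding Tset_def Lfun_def Lratio_def by (auto simp: SUP_le_iff)

lemma closed_Lratio_le_one: "closed {t. Lratio F r A p t \<le> 1}"
  unfolding Lratio_def by (intro closed_Collect_divide_le_one continuous_intros)

theorem lemmaD3:
  fixes F :: "real measure" and r :: real and A :: "'n::finite \<Rightarrow> real \<Rightarrow> real"
  assumes "prob_space F" and "sets F = sets borel"
    and "\<And>i. game F (A i)"
  shows "closed (Tset F r A)"
  unfolding Tset_eq_Inter_Lratio_le_one
  by (intro closed_Int closed_cubeS closed_INT ballI closed_Lratio_le_one)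

end
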